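(* Let $\Lambda_{({\bf A},{\bf B},{\bf c})}:\mathcal L(\mathcal H^{\otimes N'})\to\mathcal L(\mathcal H^{\otimes N})$ be a Gaussian channel. Then $\Lambda_{({\bf A},{\bf B},{\bf c})}$ is Gaussian incompatibility breaking if and only if ${\bf B}-i{\bf A}^T{\bf \Omega}{\bf A}\ge {\bf 0}$.
   Context: For $n\ge1$, $\mathcal H^{\otimes n}=L^2(\mathbb R^n)$ with canonical position and momentum operators $Q_j,P_j$, ${\bf R}=(Q_1,P_1,\ldots,Q_n,P_n)^T$, ${\bf \Omega}=\bigoplus_{j=1}^n\begin{pmatrix}0&1\\-1&0\end{pmatrix}$ (its size is determined by the phase space on which it acts), and Weyl operators $W({\bf x})=e^{-i{\bf x}^T{\bf \Omega R}}$, ${\bf x}\in\mathbb R^{2n}$. A Gaussian channel (Heisenberg picture) is a normal unital completely positive map $\Lambda:\mathcal L(\mathcal H^{\otimes N'})\to\mathcal L(\mathcal H^{\otimes N})$ with $\Lambda(W({\bf x}))=W({\bf Ax})e^{-\frac14{\bf x}^T{\bf Bx}-i{\bf c}^T{\bf x}}$ for ${\bf x}\in\mathbb R^{2N'}$, where ${\bf A}$ is a real $2N\times 2N'$ matrix, ${\bf B}$ a real $2N'\times 2N'$ matrix, ${\bf c}\in\mathbb R^{2N'}$, subject to ${\bf B}+i{\bf \Omega}-i{\bf A}^T{\bf \Omega A}\ge{\bf 0}$; it is denoted $\Lambda_{({\bf A},{\bf B},{\bf c})}$. An observable is a POVM $\mathsf{E}:\mathcal B(\mathbb R^M)\to\mathcal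 L(\mathcal H^{\otimes n})$; it is Gaussian if $\int e^{i{\bf p}^T{\bf x}}\,d\mathsf{E}({\bf x})=W({\bf Kp})e^{-\frac14{\bf p}^T{\bf Lp}-i{\bf m}^T{\bf p}}$ with ${\bf K}$ real $2n\times M$, ${\bf L}$ real $M\times M$ satisfying ${\bf L}-i{\bf K}^T{\bf \Omega K}\ge0$, ${\bf m}\in\mathbb R^M$ (every such triple determines a Gaussian observable). A channel transforms an observable $\mathsf{E}$ on $\mathcal H^{\otimes N'}$ into $\Lambda(\mathsf{E}):X\mapsto\Lambda(\mathsf{E}(X))$; for a Gaussian $\mathsf{E}$ with parameters $({\bf K},{\bf L},{\bf m})$, $\Lambda_{({\bf A},{\bf B},{\bf c})}(\mathsf{E})$ is Gaussian with parameters $({\bf AK},{\bf L}+{\bf K}^T{\bf BK},{\bf m}+{\bf K}^T{\bf c})$. A Gaussian postprocessing is a Markov kernel $f:\mathcal B(\mathbb R^{M'})\times\mathbb R^M\to[0,1]$ such that $\int e^{i{\bf p}^T{\bf y}}f(d{\bf y},{\bf x})=e^{i({\bf A}'{\bf p})^T{\bf x}}e^{-\frac14{\bf p}^T{\bf B}'{\bf p}-i{\bf c}'^T{\bf p}}$ for some real $M\times M'$ matrix ${\bf A}'$, real positive semidefinite ${\bf B}'$ and vector ${\bf c}'$; $\mathsf{E}$ is obtained from $\mathsf{G}$ via $f$ if $\mathsf{E}(X)=\int f(X,{\bf x})\,d\mathsf{G}({\bf x})$ (for $\mathsf{G}$ Gaussian with parameters $({\bf K},{\bf L},{\bf m})$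 this yields parameters $({\bf KA}',{\bf B}'+{\bf A}'^T{\bf LA}',{\bf c}'+{\bf A}'^T{\bf m})$). A collection of Gaussian observables is Gaussian compatible if there is a Gaussian observable $\mathsf{G}$ from which each member is obtained via some Gaussian postprocessing. A Gaussian channel $\Lambda$ is Gaussian incompatibility breaking if the set $\{\Lambda(\mathsf{E}):\mathsf{E}$ a Gaussian observable on $\mathcal H^{\otimes N'}\}$ is Gaussian compatible. *)

theory Defs
  imports Complex_Main "Jordan_Normal_Form.Matrix"
begin

type_synonym gparams = "real mat \<times> real mat \<times> real vec"

definition Omega :: "nat \<Rightarrow> real mat" where
  "Omega n = mat (2*n) (2*n) (\<lambda>(i,j). if even i \<and> j = i + 1 then 1
                                      else if odd i \<and> j + 1 = i then -1 else 0)"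

definition cplx :: "real mat \<Rightarrow> complex mat" where
  "cplx X = map_mat complex_of_real X"

definition psd :: "nat \<Rightarrow> complex mat \<Rightarrow> bool" where
  "psd d X \<longleftrightarrow> X \<in> carrier_mat d d \<and>
     (\<forall>v \<in> carrier_vec d. Im (conjugate v \<bullet> (X *\<^sub>v v)) = 0 \<and>
                          Re (conjugate v \<bullet> (X *\<^sub>v v)) \<ge> 0)"

text \<open>Parameters (A,B,c) of a Gaussian channel L(H^{N'}) -> L(H^N) (Heisenberg picture).\<close>
definition gaussian_channel :: "nat \<Rightarrow> nat \<Rightarrow> real mat \<Rightarrow> real mat \<Rightarrow> real vec \<Rightarrow> bool" where
  "gaussian_channel N N' A B c \<longleftrightarrow>
     A \<in> carrier_mat (2*N) (2*N') \<and> B \<in> carrier_mat (2*N') (2*N') \<and> c \<in> carrier_vec (2*N') \<and>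
     psd (2*N') (cplx B + \<i> \<cdot>\<^sub>m cplx (Omega N') - \<i> \<cdot>\<^sub>m cplx (transpose_mat A * Omega N * A))"

text \<open>Parameters (K,L,m) of a Gaussian observable on H^n with outcome space R^M.\<close>
definition gaussian_obs :: "nat \<Rightarrow> nat \<Rightarrow> gparams \<Rightarrow> bool" where
  "gaussian_obs n M E \<longleftrightarrow> (case E of (K, L, m) \<Rightarrow>
     K \<in> carrier_mat (2*n) M \<and> L \<in> carrier_mat M M \<and> m \<in> carrier_vec M \<and>
     psd M (cplx L - \<i> \<cdot>\<^sub>m cplx (transpose_mat K * Omega n * K)))"

definition outdim :: "gparams \<Rightarrow> nat" where
  "outdim E = dim_vec (snd (snd E))"

definition channel_apply :: "real mat \<Rightarrow> real mat \<Rightarrow> real vec \<Rightarrow> gparams \<Rightarrow> gparams" where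
  "channel_apply A B c E = (case E of (K, L, m) \<Rightarrow>
     (A * K, L + transpose_mat K * B * K, m + transpose_mat K *\<^sub>v c))"

text \<open>Gaussian postprocessing R^M -> R^M' with parameters (A',B',c'), B' real positive
  semidefinite (hence symmetric).\<close>
definition gaussian_postproc :: "nat \<Rightarrow> nat \<Rightarrow> real mat \<Rightarrow> real mat \<Rightarrow> real vec \<Rightarrow> bool" where
  "gaussian_postproc M M' A' B' c' \<longleftrightarrow>
     A' \<in> carrier_mat M M' \<and> B' \<in> carrier_mat M' M' \<and> c' \<in> carrier_vec M' \<and> psd M' (cplx B')"

definition postprocess :: "gparams \<Rightarrow> real mat \<Rightarrow> real mat \<Rightarrow> real vec \<Rightarrow> gparams" where
  "postprocess G A' B' c' = (case G of (K, L, m) \<Rightarrow>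
     (K * A', B' + transpose_mat A' * L * A', c' + transpose_mat A' *\<^sub>v m))"

definition obtained_from :: "gparams \<Rightarrow> gparams \<Rightarrow> bool" where
  "obtained_from E G \<longleftrightarrow> (\<exists>A' B' c'. gaussian_postproc (outdim G) (outdim E) A' B' c' \<and>
                                      E = postprocess G A' B' c')"

definition gaussian_compatible :: "nat \<Rightarrow> gparams set \<Rightarrow> bool" where
  "gaussian_compatible n S \<longleftrightarrow>
     (\<exists>G M. M \<ge> 1 \<and> gaussian_obs n M G \<and> (\<forall>E \<in> S. obtained_from E G))"

definition gaussian_incompatibility_breaking ::
  "nat \<Rightarrow> nat \<Rightarrow> real mat \<Rightarrow> real mat \<Rightarrow> real vec \<Rightarrow> bool" where
  "gaussian_incompatibility_breaking N N' A B c \<longleftrightarrow>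
     gaussian_compatible N {channel_apply A B c E | E M. M \<ge> 1 \<and> gaussian_obs N' M E}"

end

theory Submission
  imports Defs
begin

text \<open>
  For real \<open>R, S\<close> and \<open>v = x + iy\<close>, the Hermitian form of \<open>R - iS\<close> has real part
  \<open>x^T R x + y^T R y + x^T S y - y^T S x\<close> and imaginary part \<open>x^T R y - y^T R x - x^T S x - y^T S y\<close>,
  which turns every positivity condition into real inequalities.

  If \<open>B - i A^T Omega A \<ge> 0\<close>, then \<open>(A, B, 0)\<close> is itself a Gaussian observable, and every
  transformed observable \<open>(AK, L + K^T B K, m + K^T c)\<close> is its postprocessing by
  \<open>(K, L, m + K^T c)\<close>; here \<open>L \<ge> 0\<close> because \<open>L\<close> is the real part of \<open>L - i K^T Omega K \<ge> 0\<close>.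

  Conversely, let \<open>(K\<^sub>G, L\<^sub>G, m\<^sub>G)\<close> be a common parent. The single column \<open>x\<close> is a sharp
  one-outcome observable; writing its image under the channel as a postprocessing of the parent
  yields \<open>a\<close> with \<open>Ax = K\<^sub>G a\<close> and \<open>a^T L\<^sub>G a \<le> x^T B x\<close>. Since \<open>A^T Omega A\<close> and
  \<open>K\<^sub>G^T Omega K\<^sub>G\<close> take the same values on corresponding pairs, positivity of
  \<open>L\<^sub>G - i K\<^sub>G^T Omega K\<^sub>G\<close> at \<open>(a, b)\<close> transfers to \<open>B - i A^T Omega A\<close> at \<open>(x, y)\<close>;
  the imaginary part vanishes because the channel condition already forces \<open>B \<ge> 0\<close>.
\<close>

definition bilin :: "real mat \<Rightarrow> real vec \<Rightarrow> real vec \<Rightarrow> real" where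
  "bilin R x y = x \<bullet> (R *\<^sub>v y)"

lemma bilin_eq_sum:
  assumes "R \<in> carrier_mat d d" and "y \<in> carrier_vec d"
  shows "bilin R x y = (\<Sum>i<d. \<Sum>j<d. x$i * R$$(i,j) * y$j)"
  using assms unfolding bilin_def scalar_prod_def
  by (auto simp: row_def scalar_prod_def sum_distrib_left mult.assoc intro!: sum.cong
      simp flip: atLeast0LessThan)

lemma bilin_zero_left: "R \<in> carrier_mat d d \<Longrightarrow> y \<in> carrier_vec d \<Longrightarrow> bilin R (0\<^sub>v d) y = 0"
  by (simp add: bilin_eq_sum)

lemma bilin_zero_right: "R \<in> carrier_mat d d \<Longrightarrow> bilin R x (0\<^sub>v d) = 0"
  by (simp add: bilin_eq_sum)

lemma bilin_zero_mat: "y \<in> carrier_vec d \<Longrightarrow> bilin (0\<^sub>m d d) x y = 0"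
  by (simp add: bilin_eq_sum[OF zero_carrier_mat])

lemma bilin_uminus_left:
  "R \<in> carrier_mat d d \<Longrightarrow> x \<in> carrier_vec d \<Longrightarrow> y \<in> carrier_vec d \<Longrightarrow> bilin R (- x) y = - bilin R x y"
  by (simp add: bilin_eq_sum sum_negf)

lemma bilin_uminus_right:
  "R \<in> carrier_mat d d \<Longrightarrow> y \<in> carrier_vec d \<Longrightarrow> bilin R x (- y) = - bilin R x y"
  by (simp add: bilin_eq_sum sum_negf)

lemma bilin_add_mat:
  assumes "R \<in> carrier_mat d d" and "S \<in> carrier_mat d d" and "y \<in> carrier_vec d"
  shows "bilin (R + S) x y = bilin R x y + bilin S x y"
  using assms by (simp add: bilin_eq_sum[OF add_carrier_mat] bilin_eq_sum[of _ d]
      algebra_simps flip: sum.distrib)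

lemma bilin_congruence:
  assumes A: "A \<in> carrier_mat n m" and W: "W \<in> carrier_mat n n"
    and x: "x \<in> carrier_vec m" and y: "y \<in> carrier_vec m"
  shows "bilin (transpose_mat A * W * A) x y = bilin W (A *\<^sub>v x) (A *\<^sub>v y)"
proof -
  have "(transpose_mat A * W * A) *\<^sub>v y = (transpose_mat A * W) *\<^sub>v (A *\<^sub>v y)"
    using A W y by (intro assoc_mult_mat_vec[of _ m n]) auto
  also have "\<dots> = transpose_mat A *\<^sub>v (W *\<^sub>v (A *\<^sub>v y))"
    using A W y by (intro assoc_mult_mat_vec[of _ m n _ n]) auto
  finally have "(transpose_mat A * W * A) *\<^sub>v y = transpose_mat A *\<^sub>v (W *\<^sub>v (A *\<^sub>v y))" .
  moreover have "x \<bullet> (transpose_mat A *\<^sub>v (W *\<^sub>v (A *\<^sub>v y))) = (A *\<^sub>v x) \<bullet> (W *\<^sub>v (A *\<^sub>v y))"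
    using A W x y
    by (subst comm_scalar_prod[of _ m], auto simp: transpose_vec_mult_scalar comm_scalar_prod[of _ n])
  ultimately show ?thesis by (simp add: bilin_def)
qed

lemma index_congruence:
  assumes "K \<in> carrier_mat d m" and "W \<in> carrier_mat d d" and "i < m" and "j < m"
  shows "(transpose_mat K * W * K) $$ (i,j) = bilin W (col K i) (col K j)"
  using assms by (simp add: assoc_mult_mat[of _ m d _ d _ m] bilin_def mult_mat_vec_def)

lemma hermitian_form_eq_sum:
  assumes "X \<in> carrier_mat d d" and "(v::complex vec) \<in> carrier_vec d"
  shows "conjugate v \<bullet> (X *\<^sub>v v) = (\<Sum>i<d. \<Sum>j<d. cnj (v$i) * X$$(i,j) * v$j)"
  using assms unfolding scalar_prod_def
  by (auto simp: row_def scalar_prod_def sum_distrib_left mult.assoc intro!: sum.cong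
      simp flip: atLeast0LessThan)

lemma hermitian_form_real_imag:
  assumes R: "R \<in> carrier_mat d d" and S: "S \<in> carrier_mat d d" and v: "v \<in> carrier_vec d"
  defines "x \<equiv> map_vec Re v" and "y \<equiv> map_vec Im v"
  shows "conjugate v \<bullet> ((cplx R - \<i> \<cdot>\<^sub>m cplx S) *\<^sub>v v) =
    Complex (bilin R x x + bilin R y y + bilin S x y - bilin S y x)
            (bilin R x y - bilin R y x - bilin S x x - bilin S y y)"
proof -
  have X: "cplx R - \<i> \<cdot>\<^sub>m cplx S \<in> carrier_mat d d" using R S by (auto simp: cplx_def)
  have xy: "x \<in> carrier_vec d" "y \<in> carrier_vec d" using v by (auto simp: x_def y_def)
  show ?thesis
    unfolding hermitian_form_eq_sum[OF X v] bilin_eq_sum[OF R xy(1)] bilin_eq_sum[OF R xy(2)]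
      bilin_eq_sum[OF S xy(1)] bilin_eq_sum[OF S xy(2)]
    using R S v
    by (intro complex_eqI)
      (simp_all add: Re_sum Im_sum cplx_def x_def y_def flip: sum_subtractf sum.distrib,
       (intro sum.cong refl; simp add: algebra_simps)+)
qed

lemma psd_iff_bilin:
  assumes R: "R \<in> carrier_mat d d" and S: "S \<in> carrier_mat d d"
  shows "psd d (cplx R - \<i> \<cdot>\<^sub>m cplx S) \<longleftrightarrow>
    (\<forall>x\<in>carrier_vec d. \<forall>y\<in>carrier_vec d.
       bilin R x y - bilin R y x = bilin S x x + bilin S y y \<and>
       0 \<le> bilin R x x + bilin R y y + bilin S x y - bilin S y x)"
    (is "_ \<longleftrightarrow> (\<forall>x\<in>_. \<forall>y\<in>_. ?P x y)")
proof
  assume psd: "psd d (cplx R - \<i> \<cdot>\<^sub>m cplx S)"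
  show "\<forall>x\<in>carrier_vec d. \<forall>y\<in>carrier_vec d. ?P x y"
  proof (intro ballI)
    fix x y :: "real vec" assume x: "x \<in> carrier_vec d" and y: "y \<in> carrier_vec d"
    define v where "v = vec d (\<lambda>i. Complex (x$i) (y$i))"
    have v: "v \<in> carrier_vec d" by (simp add: v_def)
    have "Im (conjugate v \<bullet> ((cplx R - \<i> \<cdot>\<^sub>m cplx S) *\<^sub>v v)) = 0 \<and>
          Re (conjugate v \<bullet> ((cplx R - \<i> \<cdot>\<^sub>m cplx S) *\<^sub>v v)) \<ge> 0"
      using psd v unfolding psd_def by blast
    moreover have "map_vec Re v = x" "map_vec Im v = y" using x y by (auto simp: v_def)
    ultimately show "?P x y"
      unfolding hermitian_form_real_imag[OF R S v] by auto
  qed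
next
  assume P: "\<forall>x\<in>carrier_vec d. \<forall>y\<in>carrier_vec d. ?P x y"
  show "psd d (cplx R - \<i> \<cdot>\<^sub>m cplx S)"
    unfolding psd_def
  proof (intro conjI ballI)
    show "cplx R - \<i> \<cdot>\<^sub>m cplx S \<in> carrier_mat d d" using R S by (auto simp: cplx_def)
  next
    fix v :: "complex vec" assume v: "v \<in> carrier_vec d"
    have "map_vec Re v \<in> carrier_vec d" "map_vec Im v \<in> carrier_vec d" using v by auto
    with P show "Im (conjugate v \<bullet> ((cplx R - \<i> \<cdot>\<^sub>m cplx S) *\<^sub>v v)) = 0"
      "Re (conjugate v \<bullet> ((cplx R - \<i> \<cdot>\<^sub>m cplx S) *\<^sub>v v)) \<ge> 0"
      unfolding hermitian_form_real_imag[OF R S v] by auto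
  qed
qed

lemma psd_real_iff:
  assumes R: "R \<in> carrier_mat d d"
  shows "psd d (cplx R) \<longleftrightarrow>
    (\<forall>x\<in>carrier_vec d. \<forall>y\<in>carrier_vec d. bilin R x y = bilin R y x) \<and>
    (\<forall>x\<in>carrier_vec d. 0 \<le> bilin R x x)" (is "_ \<longleftrightarrow> ?sym \<and> ?nonneg")
proof -
  have "cplx R = cplx R - \<i> \<cdot>\<^sub>m cplx (0\<^sub>m d d)"
    using R by (intro eq_matI) (auto simp: cplx_def)
  then have "psd d (cplx R) \<longleftrightarrow>
      (\<forall>x\<in>carrier_vec d. \<forall>y\<in>carrier_vec d. bilin R x y = bilin R y x \<and> 0 \<le> bilin R x x + bilin R y y)"
    using psd_iff_bilin[OF R zero_carrier_mat] by (simp add: bilin_zero_mat)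
  also have "\<dots> \<longleftrightarrow> ?sym \<and> ?nonneg"
    using bilin_zero_right[OF R] bilin_zero_left[OF R zero_carrier_vec] zero_carrier_vec[of d]
    by (metis add.right_neutral add_nonneg_nonneg)
  finally show ?thesis .
qed

lemma psd_real_part:
  assumes R: "R \<in> carrier_mat d d" and S: "S \<in> carrier_mat d d"
    and psd: "psd d (cplx R - \<i> \<cdot>\<^sub>m cplx S)"
  shows "psd d (cplx R)"
  unfolding psd_real_iff[OF R]
proof (intro conjI ballI)
  note P = psd[unfolded psd_iff_bilin[OF R S], rule_format]
  fix x y :: "real vec" assume x: "x \<in> carrier_vec d" and y: "y \<in> carrier_vec d"
  have "- y \<in> carrier_vec d" using y by simp
  \<comment> \<open>the imaginary part at \<open>(x, y)\<close> and at \<open>(x, -y)\<close>: the terms of \<open>S\<close> agree, those of \<open>R\<close> change sign\<close>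
  have "bilin R x y - bilin R y x = bilin S x x + bilin S y y"
       "bilin R x (- y) - bilin R (- y) x = bilin S x x + bilin S (- y) (- y)"
    using P[OF x y] P[OF x \<open>- y \<in> carrier_vec d\<close>] by auto
  then show "bilin R x y = bilin R y x"
    using R S x y by (simp add: bilin_uminus_left bilin_uminus_right)
  show "0 \<le> bilin R x x"
    using P[OF x zero_carrier_vec] R S x by (simp add: bilin_zero_left bilin_zero_right)
qed

lemma bilin_antisym_self:
  assumes W: "W \<in> carrier_mat d d" and anti: "\<And>i j. i < d \<Longrightarrow> j < d \<Longrightarrow> W $$ (j,i) = - W $$ (i,j)"
    and u: "u \<in> carrier_vec d"
  shows "bilin W u u = 0"
proof -
  have "bilin W u u = (\<Sum>j<d. \<Sum>i<d. u$i * W$$(i,j) * u$j)"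
    unfolding bilin_eq_sum[OF W u] by (rule sum.swap)
  also have "\<dots> = (\<Sum>j<d. \<Sum>i<d. - (u$j * W$$(j,i) * u$i))"
  proof (intro sum.cong refl)
    fix i j assume "i \<in> {..<d}" "j \<in> {..<d}"
    then show "u$i * W$$(i,j) * u$j = - (u$j * W$$(j,i) * u$i)" by (simp add: anti[of i j])
  qed
  also have "\<dots> = - bilin W u u"
    by (simp add: bilin_eq_sum[OF W u] sum_negf)
  finally show ?thesis by simp
qed

lemma Omega_carrier [simp]: "Omega n \<in> carrier_mat (2*n) (2*n)"
  by (simp add: Omega_def)

lemma bilin_Omega_self: "u \<in> carrier_vec (2*n) \<Longrightarrow> bilin (Omega n) u u = 0"
  by (rule bilin_antisym_self[OF Omega_carrier]) (auto simp: Omega_def)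

lemma bilin_symplectic_congruence_self:
  assumes "A \<in> carrier_mat (2*n) m" and "x \<in> carrier_vec m"
  shows "bilin (transpose_mat A * Omega n * A) x x = 0"
  using assms by (simp add: bilin_congruence bilin_Omega_self)

lemma mat_of_cols_single_mult_one:
  "(x :: 'a :: semiring_1 vec) \<in> carrier_vec n \<Longrightarrow> mat_of_cols n [x] *\<^sub>v vec 1 (\<lambda>_. 1) = x"
  by (intro eq_vecI) (auto simp: mat_of_cols_def mult_mat_vec_def scalar_prod_def)

lemma gaussian_obs_quadrature:
  assumes x: "x \<in> carrier_vec (2*n)"
  shows "gaussian_obs n 1 (mat_of_cols (2*n) [x], 0\<^sub>m 1 1, 0\<^sub>v 1)"
proof -
  let ?X = "mat_of_cols (2*n) [x]"
  have X: "?X \<in> carrier_mat (2*n) 1" using mat_of_cols_carrier(1)[of "2*n" "[x]"] by simp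
  have "(transpose_mat ?X * Omega n * ?X) $$ (0,0) = 0"
    using x by (subst index_congruence[OF X Omega_carrier]) (simp_all add: bilin_Omega_self)
  then have "transpose_mat ?X * Omega n * ?X = 0\<^sub>m 1 1"
    using X by (intro eq_matI) auto
  moreover have "psd 1 (cplx (0\<^sub>m 1 1) - \<i> \<cdot>\<^sub>m cplx (0\<^sub>m 1 1))"
    by (simp add: psd_iff_bilin bilin_zero_mat)
  ultimately show ?thesis
    using X unfolding gaussian_obs_def by simp
qed

lemma gaussian_channel_noise_psd:
  assumes "gaussian_channel N N' A B c"
  shows "psd (2*N') (cplx B)"
proof -
  define J where "J = transpose_mat A * Omega N * A"
  have A: "A \<in> carrier_mat (2*N) (2*N')" and B: "B \<in> carrier_mat (2*N') (2*N')"
    and psd: "psd (2*N') (cplx B + \<i> \<cdot>\<^sub>m cplx (Omega N') - \<i> \<cdot>\<^sub>m cplx J)"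
    using assms unfolding gaussian_channel_def J_def by auto
  have J: "J \<in> carrier_mat (2*N') (2*N')" using A unfolding J_def by auto
  then have JOm: "J - Omega N' \<in> carrier_mat (2*N') (2*N')" by (intro minus_carrier_mat) simp
  have "cplx B + \<i> \<cdot>\<^sub>m cplx (Omega N') - \<i> \<cdot>\<^sub>m cplx J = cplx B - \<i> \<cdot>\<^sub>m cplx (J - Omega N')"
    using B J Omega_carrier[of N'] by (intro eq_matI) (auto simp: cplx_def algebra_simps)
  with psd show ?thesis
    using psd_real_part[OF B JOm] by simp
qed

lemma obtained_from_dominated:
  assumes obt: "obtained_from (K, L, m) (KG, LG, mG)"
    and LG: "LG \<in> carrier_mat M M" and mG: "mG \<in> carrier_vec M"
  shows "\<exists>A' \<in> carrier_mat M (dim_vec m). K = KG * A' \<and>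
    (\<forall>u \<in> carrier_vec (dim_vec m). bilin LG (A' *\<^sub>v u) (A' *\<^sub>v u) \<le> bilin L u u)"
proof -
  obtain A' B' c' where pp: "gaussian_postproc M (dim_vec m) A' B' c'"
    and eq: "(K, L, m) = postprocess (KG, LG, mG) A' B' c'"
    using obt mG unfolding obtained_from_def outdim_def by auto
  have A': "A' \<in> carrier_mat M (dim_vec m)" and B': "B' \<in> carrier_mat (dim_vec m) (dim_vec m)"
    and psd: "psd (dim_vec m) (cplx B')"
    using pp unfolding gaussian_postproc_def by auto
  have K: "K = KG * A'" and L: "L = B' + transpose_mat A' * LG * A'"
    using eq unfolding postprocess_def by auto
  have "bilin LG (A' *\<^sub>v u) (A' *\<^sub>v u) \<le> bilin L u u" if u: "u \<in> carrier_vec (dim_vec m)" for u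
  proof -
    have "transpose_mat A' * LG * A' \<in> carrier_mat (dim_vec m) (dim_vec m)" using A' LG by auto
    then have "bilin L u u = bilin B' u u + bilin (transpose_mat A' * LG * A') u u"
      unfolding L using B' u by (intro bilin_add_mat)
    also have "\<dots> = bilin B' u u + bilin LG (A' *\<^sub>v u) (A' *\<^sub>v u)"
      using bilin_congruence[OF A' LG u u] by simp
    moreover have "0 \<le> bilin B' u u" using psd u psd_real_iff[OF B'] by blast
    ultimately show ?thesis by simp
  qed
  with A' K show ?thesis by blast
qed

lemma channel_quadrature_dominated:
  assumes A: "A \<in> carrier_mat (2*N) (2*N')" and B: "B \<in> carrier_mat (2*N') (2*N')"
    and KG: "KG \<in> carrier_mat (2*N) M" and LG: "LG \<in> carrier_mat M M" and mG: "mG \<in> carrier_vec M"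
    and parent: "\<forall>E \<in> {channel_apply A B c E | E M. M \<ge> 1 \<and> gaussian_obs N' M E}.
                   obtained_from E (KG, LG, mG)"
    and x: "x \<in> carrier_vec (2*N')"
  shows "\<exists>a \<in> carrier_vec M. A *\<^sub>v x = KG *\<^sub>v a \<and> bilin LG a a \<le> bilin B x x"
proof -
  let ?X = "mat_of_cols (2*N') [x]" and ?u = "vec 1 (\<lambda>_. 1::real)"
  have X: "?X \<in> carrier_mat (2*N') 1" using mat_of_cols_carrier(1)[of "2*N'" "[x]"] by simp
  have u: "?u \<in> carrier_vec 1" by simp
  have Xu: "?X *\<^sub>v ?u = x" using x by (rule mat_of_cols_single_mult_one)
  have "channel_apply A B c (?X, 0\<^sub>m 1 1, 0\<^sub>v 1) \<in> {channel_apply A B c E | E M. M \<ge> 1 \<and> gaussian_obs N' M E}"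
    using gaussian_obs_quadrature[OF x] by blast
  with parent have "obtained_from
      (A * ?X, 0\<^sub>m 1 1 + transpose_mat ?X * B * ?X, 0\<^sub>v 1 + transpose_mat ?X *\<^sub>v c) (KG, LG, mG)"
    unfolding channel_apply_def by auto
  from obtained_from_dominated[OF this LG mG] obtain A' where A': "A' \<in> carrier_mat M 1"
    and K: "A * ?X = KG * A'"
    and dom: "bilin LG (A' *\<^sub>v ?u) (A' *\<^sub>v ?u) \<le> bilin (0\<^sub>m 1 1 + transpose_mat ?X * B * ?X) ?u ?u"
    by auto
  have "A *\<^sub>v x = (A * ?X) *\<^sub>v ?u"
    by (simp only: assoc_mult_mat_vec[OF A X u] Xu)
  also have "\<dots> = KG *\<^sub>v (A' *\<^sub>v ?u)"
    by (simp only: K assoc_mult_mat_vec[OF KG A' u])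
  finally have Ax: "A *\<^sub>v x = KG *\<^sub>v (A' *\<^sub>v ?u)" .
  have "transpose_mat ?X * B * ?X \<in> carrier_mat 1 1" using X B by auto
  then have "bilin (0\<^sub>m 1 1 + transpose_mat ?X * B * ?X) ?u ?u = bilin B x x"
    using bilin_congruence[OF X B u u, unfolded Xu] by simp
  moreover have "A' *\<^sub>v ?u \<in> carrier_vec M" using A' u by (rule mult_mat_vec_carrier)
  ultimately show ?thesis
    using Ax dom by metis
qed

lemma gaussian_incompatibility_breaking_imp_psd:
  assumes channel: "gaussian_channel N N' A B c"
    and breaking: "gaussian_incompatibility_breaking N N' A B c"
  shows "psd (2*N') (cplx B - \<i> \<cdot>\<^sub>m cplx (transpose_mat A * Omega N * A))"
proof -
  define J where "J = transpose_mat A * Omega N * A"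
  have A: "A \<in> carrier_mat (2*N) (2*N')" and B: "B \<in> carrier_mat (2*N') (2*N')"
    using channel unfolding gaussian_channel_def by auto
  have J: "J \<in> carrier_mat (2*N') (2*N')" using A unfolding J_def by auto
  have B_sym: "\<forall>x\<in>carrier_vec (2*N'). \<forall>y\<in>carrier_vec (2*N'). bilin B x y = bilin B y x"
    using gaussian_channel_noise_psd[OF channel] psd_real_iff[OF B] by blast
  obtain G M where "gaussian_obs N M G"
    and parent: "\<forall>E \<in> {channel_apply A B c E | E M. M \<ge> 1 \<and> gaussian_obs N' M E}. obtained_from E G"
    using breaking unfolding gaussian_incompatibility_breaking_def gaussian_compatible_def by blast
  then obtain KG LG mG where G: "G = (KG, LG, mG)"
    and KG: "KG \<in> carrier_mat (2*N) M" and LG: "LG \<in> carrier_mat M M" and mG: "mG \<in> carrier_vec M"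
    and psd_G: "psd M (cplx LG - \<i> \<cdot>\<^sub>m cplx (transpose_mat KG * Omega N * KG))"
    unfolding gaussian_obs_def by (cases G) auto
  define SG where "SG = transpose_mat KG * Omega N * KG"
  have SG: "SG \<in> carrier_mat M M" using KG unfolding SG_def by auto
  note dominated = channel_quadrature_dominated[OF A B KG LG mG parent[unfolded G]]
  show ?thesis
    unfolding J_def[symmetric] psd_iff_bilin[OF B J]
  proof (intro ballI conjI)
    fix x y :: "real vec" assume x: "x \<in> carrier_vec (2*N')" and y: "y \<in> carrier_vec (2*N')"
    show "bilin B x y - bilin B y x = bilin J x x + bilin J y y"
      using B_sym x y A unfolding J_def by (simp add: bilin_symplectic_congruence_self)
    obtain a where a: "a \<in> carrier_vec M" "A *\<^sub>v x = KG *\<^sub>v a" "bilin LG a a \<le> bilin B x x"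
      using dominated[OF x] by blast
    obtain b where b: "b \<in> carrier_vec M" "A *\<^sub>v y = KG *\<^sub>v b" "bilin LG b b \<le> bilin B y y"
      using dominated[OF y] by blast
    have "0 \<le> bilin LG a a + bilin LG b b + bilin SG a b - bilin SG b a"
      using psd_G a(1) b(1) unfolding SG_def[symmetric] psd_iff_bilin[OF LG SG] by blast
    moreover have "bilin J x y = bilin SG a b" "bilin J y x = bilin SG b a"
      unfolding J_def SG_def using A KG x y a b by (simp_all add: bilin_congruence)
    ultimately show "0 \<le> bilin B x x + bilin B y y + bilin J x y - bilin J y x"
      using a b by linarith
  qed
qed

lemma psd_imp_gaussian_incompatibility_breaking:
  assumes "N' \<ge> 1" and channel: "gaussian_channel N N' A B c"
    and psd: "psd (2*N') (cplx B - \<i> \<cdot>\<^sub>m cplx (transpose_mat A * Omega N * A))"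
  shows "gaussian_incompatibility_breaking N N' A B c"
  unfolding gaussian_incompatibility_breaking_def gaussian_compatible_def
proof (intro exI conjI ballI)
  have A: "A \<in> carrier_mat (2*N) (2*N')" and B: "B \<in> carrier_mat (2*N') (2*N')"
    and c: "c \<in> carrier_vec (2*N')"
    using channel unfolding gaussian_channel_def by auto
  show "1 \<le> 2*N'" using \<open>N' \<ge> 1\<close> by simp
  show "gaussian_obs N (2*N') (A, B, 0\<^sub>v (2*N'))"
    using A B psd unfolding gaussian_obs_def by simp
  fix E assume "E \<in> {channel_apply A B c E | E M. M \<ge> 1 \<and> gaussian_obs N' M E}"
  then obtain K L m M where E: "E = channel_apply A B c (K, L, m)"
    and K: "K \<in> carrier_mat (2*N') M" and L: "L \<in> carrier_mat M M" and m: "m \<in> carrier_vec M"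
    and psd_E: "psd M (cplx L - \<i> \<cdot>\<^sub>m cplx (transpose_mat K * Omega N' * K))"
    unfolding gaussian_obs_def by auto
  have "transpose_mat K * Omega N' * K \<in> carrier_mat M M" using K by auto
  then have "psd M (cplx L)" using psd_real_part[OF L _ psd_E] by blast
  moreover have "transpose_mat K *\<^sub>v 0\<^sub>v (2*N') = 0\<^sub>v M" using K by (intro eq_vecI) auto
  ultimately show "obtained_from E (A, B, 0\<^sub>v (2*N'))"
    unfolding obtained_from_def gaussian_postproc_def outdim_def E channel_apply_def postprocess_def
    using K L m c by (intro exI[of _ K] exI[of _ L] exI[of _ "m + transpose_mat K *\<^sub>v c"]) auto
qed

theorem proposition2:
  fixes N N' :: nat and A B :: "real mat" and c :: "real vec"
  assumes "N \<ge> 1" and "N' \<ge> 1"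
    and "gaussian_channel N N' A B c"
  shows "gaussian_incompatibility_breaking N N' A B c \<longleftrightarrow>
         psd (2*N') (cplx B - \<i> \<cdot>\<^sub>m cplx (transpose_mat A * Omega N * A))"
  using assms gaussian_incompatibility_breaking_imp_psd psd_imp_gaussian_incompatibility_breaking
  by blast

end
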